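(* Let $V$ be a vertex algebra of countable dimension over $\mathbb{C}$ and let $W$ be an irreducible $L_r(V)$-module. Then $W$ is isomorphic as an $L_r(V)$-module to $U_{\mathbf{a}}$ for some irreducible $V$-module $U$ and some $\mathbf{a}\in(\mathbb{C}^\times)^r$.
   Context: Let $L_r=\mathbb{C}[t_1^{\pm1},\dots,t_r^{\pm1}]$, with $\mathbf{t}^{\mathbf{m}}=t_1^{m_1}\cdots t_r^{m_r}$; as a commutative associative algebra with identity it is a vertex algebra with $Y(a,x)b=ab$ and vacuum $1$. For a vertex algebra $V$, $L_r(V)=V\otimes L_r$ denotes the tensor product vertex algebra. For a $V$-module $(U,Y_U)$ and $\mathbf{a}=(a_1,\dots,a_r)\in(\mathbb{C}^\times)^r$, $U_{\mathbf{a}}$ denotes the $L_r(V)$-module with underlying space $U$ and vertex operators $\widehat{Y}(v\otimes\mathbf{t}^{\mathbf{m}},x)=\mathbf{a}^{\mathbf{m}}Y_U(v,x)$ for $v\in V,\mathbf{m}\in\mathbb{Z}^r$, where $\mathbf{a}^{\mathbf{m}}=a_1^{m_1}\cdots a_r^{m_r}$. *)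

theory Defs
  imports Complex_Main "HOL-Library.Poly_Mapping" "HOL-Library.Countable_Set"
begin

text \<open>Finite sum of an eventually-zero family indexed by nat (the sums in the
Borcherds identity are finite thanks to the truncation axiom).\<close>
definition fsum :: "(nat \<Rightarrow> 'a::comm_monoid_add) \<Rightarrow> 'a" where
  "fsum f = sum f {i. f i \<noteq> 0}"

text \<open>The Jacobi identity is written
in its equivalent component form (Borcherds identity).\<close>
definition vertex_module ::
  "(complex \<Rightarrow> 'v::ab_group_add \<Rightarrow> 'v) \<Rightarrow> ('v \<Rightarrow> int \<Rightarrow> 'v \<Rightarrow> 'v) \<Rightarrow> 'v \<Rightarrow>
   (complex \<Rightarrow> 'm::ab_group_add \<Rightarrow> 'm) \<Rightarrow> ('v \<Rightarrow> int \<Rightarrow> 'm \<Rightarrow> 'm) \<Rightarrow> bool" where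
  "vertex_module sc Y vac scM YM \<longleftrightarrow>
     vector_space sc \<and> vector_space scM \<and>
     (\<forall>u n. Vector_Spaces.linear scM scM (YM u n)) \<and>
     (\<forall>n w. Vector_Spaces.linear sc scM (\<lambda>u. YM u n w)) \<and>
     (\<forall>u w. \<exists>N. \<forall>n\<ge>N. YM u n w = 0) \<and>
     (\<forall>n w. YM vac n w = (if n = -1 then w else 0)) \<and>
     (\<forall>u v w l m n.
        fsum (\<lambda>i. scM ((of_int m) gchoose i) (YM (Y u (l + int i) v) (m + n - int i) w)) =
        fsum (\<lambda>i. scM ((-1) ^ i * ((of_int l) gchoose i))
                   (YM u (m + l - int i) (YM v (n + int i) w)
                    - scM ((-1) powi l) (YM v (n + l - int i) (YM u (m + int i) w)))))"

definition vertex_algebra ::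
  "(complex \<Rightarrow> 'v::ab_group_add \<Rightarrow> 'v) \<Rightarrow> ('v \<Rightarrow> int \<Rightarrow> 'v \<Rightarrow> 'v) \<Rightarrow> 'v \<Rightarrow> bool" where
  "vertex_algebra sc Y vac \<longleftrightarrow>
     vertex_module sc Y vac sc Y \<and> (\<forall>u. Y u (-1) vac = u) \<and> (\<forall>u n. n \<ge> 0 \<longrightarrow> Y u n vac = 0)"

definition countable_dim :: "(complex \<Rightarrow> 'v::ab_group_add \<Rightarrow> 'v) \<Rightarrow> bool" where
  "countable_dim sc \<longleftrightarrow>
     (\<exists>B. countable B \<and> \<not> module.dependent sc B \<and> module.span sc B = UNIV)"

definition irreducible_module ::
  "(complex \<Rightarrow> 'v::ab_group_add \<Rightarrow> 'v) \<Rightarrow> ('v \<Rightarrow> int \<Rightarrow> 'v \<Rightarrow> 'v) \<Rightarrow> 'v \<Rightarrow>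
   (complex \<Rightarrow> 'm::ab_group_add \<Rightarrow> 'm) \<Rightarrow> ('v \<Rightarrow> int \<Rightarrow> 'm \<Rightarrow> 'm) \<Rightarrow> bool" where
  "irreducible_module sc Y vac scM YM \<longleftrightarrow>
     vertex_module sc Y vac scM YM \<and> (\<exists>w::'m. w \<noteq> 0) \<and>
     (\<forall>S. module.subspace scM S \<and> (\<forall>u n w. w \<in> S \<longrightarrow> YM u n w \<in> S)
          \<longrightarrow> S = {0} \<or> S = UNIV)"

definition module_iso ::
  "(complex \<Rightarrow> 'm1::ab_group_add \<Rightarrow> 'm1) \<Rightarrow> ('v \<Rightarrow> int \<Rightarrow> 'm1 \<Rightarrow> 'm1) \<Rightarrow>
   (complex \<Rightarrow> 'm2::ab_group_add \<Rightarrow> 'm2) \<Rightarrow> ('v \<Rightarrow> int \<Rightarrow> 'm2 \<Rightarrow> 'm2) \<Rightarrow> bool" where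
  "module_iso sc1 Y1 sc2 Y2 \<longleftrightarrow>
     (\<exists>f. bij f \<and> Vector_Spaces.linear sc1 sc2 f \<and> (\<forall>u n w. f (Y1 u n w) = Y2 u n (f w)))"

text \<open>L_r(V) = V \<otimes> C[t_1^{\<pm>1},...,t_r^{\<pm>1}], realised as finitely supported functions
Z^r \<rightarrow> V (the element F corresponds to \<Sum>_m F(m) \<otimes> t^m); r = CARD('i).\<close>
definition lr_scale ::
  "(complex \<Rightarrow> 'v::ab_group_add \<Rightarrow> 'v) \<Rightarrow> complex \<Rightarrow> (('i \<Rightarrow> int) \<Rightarrow>\<^sub>0 'v) \<Rightarrow> (('i \<Rightarrow> int) \<Rightarrow>\<^sub>0 'v)" where
  "lr_scale sc c F = (\<Sum>k\<in>Poly_Mapping.keys F. Poly_Mapping.single k (sc c (Poly_Mapping.lookup F k)))"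

definition lr_Y ::
  "('v::ab_group_add \<Rightarrow> int \<Rightarrow> 'v \<Rightarrow> 'v) \<Rightarrow> (('i \<Rightarrow> int) \<Rightarrow>\<^sub>0 'v) \<Rightarrow> int \<Rightarrow>
   (('i \<Rightarrow> int) \<Rightarrow>\<^sub>0 'v) \<Rightarrow> (('i \<Rightarrow> int) \<Rightarrow>\<^sub>0 'v)" where
  "lr_Y Y F n G = (\<Sum>k\<in>Poly_Mapping.keys F. \<Sum>k'\<in>Poly_Mapping.keys G.
                     Poly_Mapping.single (\<lambda>i. k i + k' i) (Y (Poly_Mapping.lookup F k) n (Poly_Mapping.lookup G k')))"

definition lr_vac :: "'v::zero \<Rightarrow> (('i \<Rightarrow> int) \<Rightarrow>\<^sub>0 'v)" where
  "lr_vac vac = Poly_Mapping.single (\<lambda>i. 0) vac"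

text \<open>The L_r(V)-module U_a: (v \<otimes> t^m)_n w = a^m v_n w, extended linearly.\<close>
definition twist_Y ::
  "(complex \<Rightarrow> 'm::ab_group_add \<Rightarrow> 'm) \<Rightarrow> ('v::zero \<Rightarrow> int \<Rightarrow> 'm \<Rightarrow> 'm) \<Rightarrow> ('i::finite \<Rightarrow> complex) \<Rightarrow>
   (('i \<Rightarrow> int) \<Rightarrow>\<^sub>0 'v) \<Rightarrow> int \<Rightarrow> 'm \<Rightarrow> 'm" where
  "twist_Y scU YU a F n w = (\<Sum>k\<in>Poly_Mapping.keys F. scU (\<Prod>i\<in>UNIV. a i powi k i) (YU (Poly_Mapping.lookup F k) n w))"

end

(*
  A nonzero vector of the irreducible L_r(V)-module W generates it under the countably many
  modes (v \<otimes> t^k)_n with v in a countable basis of V, so W has countable dimension. The operators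
  (vac \<otimes> t^k)_{-1} commute with all modes of W (Borcherds identity with l = 0), so by Schur's
  lemma in Dixmier's form for spaces of countable dimension they are scalars c(k). The Borcherds
  identity at l = -1 gives c(k + k') = c(k) c(k') and (v \<otimes> t^k)_n = (vac \<otimes> t^k)_{-1} (v \<otimes> 1)_n,
  so c(k) = a^k and W is the twist U_a of its restriction U to V \<otimes> 1. Submodules of U are
  submodules of U_a, hence U is irreducible.
*)

theory Submission
  imports Defs "HOL-Computational_Algebra.Fundamental_Theorem_Algebra"
    "HOL-Analysis.Continuum_Not_Denumerable"
begin

definition irreducible_under ::
  "('a::field \<Rightarrow> 'b::ab_group_add \<Rightarrow> 'b) \<Rightarrow> ('b \<Rightarrow> 'b) set \<Rightarrow> bool" where
  "irreducible_under scale Ops \<longleftrightarrow>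
     (\<forall>S. module.subspace scale S \<and> (\<forall>g\<in>Ops. g ` S \<subseteq> S) \<longrightarrow> S = {0} \<or> S = UNIV)"

lemma irreducible_underD:
  assumes "irreducible_under scale Ops" and "module.subspace scale S"
    and "\<And>g. g \<in> Ops \<Longrightarrow> g ` S \<subseteq> S"
  shows "S = {0} \<or> S = UNIV"
  using assms unfolding irreducible_under_def by blast

context vector_space
begin

interpretation endo: vector_space_pair scale scale ..

lemma countable_spanning_set_if_irreducible:
  fixes x :: 'b
  assumes "countable Ops" and lin: "\<And>g. g \<in> Ops \<Longrightarrow> Vector_Spaces.linear scale scale g"
    and irr: "irreducible_under scale Ops" and "x \<noteq> 0"
  shows "\<exists>G. countable G \<and> span G = UNIV"
proof -
  define orbit where "orbit = (\<lambda>gs. foldr (\<lambda>g. g) gs x) ` lists Ops"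
  have "countable orbit"
    unfolding orbit_def using \<open>countable Ops\<close> by simp
  have "g ` span orbit \<subseteq> span orbit" if "g \<in> Ops" for g
  proof -
    have "g ` orbit \<subseteq> orbit"
      unfolding orbit_def using that by (auto intro!: image_eqI[where x = "g # _"])
    then show ?thesis
      using endo.linear_span_image[OF lin[OF that]] span_mono by metis
  qed
  moreover have "x \<in> span orbit"
    by (rule span_base) (auto simp: orbit_def image_iff intro!: bexI[of _ "[]"])
  ultimately have "span orbit = UNIV"
    using irreducible_underD[OF irr subspace_span] \<open>x \<noteq> 0\<close> by blast
  with \<open>countable orbit\<close> show ?thesis by blast
qed

lemma schur_lemma:
  assumes irr: "irreducible_under scale Ops"
    and lin: "\<And>g. g \<in> Ops \<Longrightarrow> Vector_Spaces.linear scale scale g"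
    and f: "Vector_Spaces.linear scale scale f" and comm: "\<And>g x. g \<in> Ops \<Longrightarrow> f (g x) = g (f x)"
  shows "(\<forall>x. f x = 0) \<or> bij f"
proof -
  have "g ` {x. f x = 0} \<subseteq> {x. f x = 0}" if "g \<in> Ops" for g
    using comm[OF that] endo.linear_0[OF lin[OF that]] by auto
  then have "{x. f x = 0} = {0} \<or> {x. f x = 0} = UNIV"
    by (rule irreducible_underD[OF irr endo.linear_subspace_kernel[OF f]])
  moreover have "g ` range f \<subseteq> range f" if "g \<in> Ops" for g
    by (auto simp: comm[OF that, symmetric])
  then have "range f = {0} \<or> range f = UNIV"
    by (rule irreducible_underD[OF irr endo.linear_subspace_image[OF f subspace_UNIV]])
  ultimately show ?thesis
    using endo.linear_inj_iff_eq_0[OF f] by (auto simp: bij_def)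
qed

lemma countable_if_independent:
  assumes "countable G" and "span G = UNIV" and "independent I"
  shows "countable I"
proof (cases "G = {}")
  case True
  then have "I \<subseteq> {0}" using \<open>span G = UNIV\<close> by auto
  moreover have "0 \<notin> I" using \<open>independent I\<close> dependent_zero by blast
  ultimately have "I = {}" by auto
  then show ?thesis by simp
next
  case False
  define g where "g = from_nat_into G"
  have "range g = G" using False \<open>countable G\<close> by (simp add: g_def)
  have "x \<in> span (range g) \<Longrightarrow> \<exists>N. x \<in> span (g ` {..<N})" for x
  proof (induction rule: span_induct_alt)
    case base
    show ?case using span_zero by blast
  next
    case (step c x y)
    then obtain n M where "x = g n" and "y \<in> span (g ` {..<M})" by blast
    then have "x \<in> span (g ` {..<max (Suc n) M})" and "y \<in> span (g ` {..<max (Suc n) M})"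
      by (auto intro: span_base span_mono[THEN subsetD, of "g ` {..<M}"])
    then show ?case by (blast intro: span_add span_scale)
  qed
  then have I: "I = (\<Union>N. I \<inter> span (g ` {..<N}))"
    using \<open>range g = G\<close> \<open>span G = UNIV\<close> by blast
  have "finite (I \<inter> span (g ` {..<N}))" for N
    using independent_span_bound[of "g ` {..<N}" "I \<inter> span (g ` {..<N})"]
      independent_mono[OF \<open>independent I\<close>] by blast
  then have "countable (\<Union>N. I \<inter> span (g ` {..<N}))"
    by (intro countable_UN) (auto intro: countable_finite)
  with I show ?thesis by simp
qed

end

definition poly_op ::
  "('a::field \<Rightarrow> 'b::ab_group_add \<Rightarrow> 'b) \<Rightarrow> ('b \<Rightarrow> 'b) \<Rightarrow> 'a poly \<Rightarrow> 'b \<Rightarrow> 'b" where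
  "poly_op scale T p = foldr (\<lambda>a q x. scale a x + T (q x)) (coeffs p) (\<lambda>_. 0)"

locale linear_operator = vector_space scale
  for scale :: "'a::field \<Rightarrow> 'b::ab_group_add \<Rightarrow> 'b" (infixr \<open>*s\<close> 75) +
  fixes T :: "'b \<Rightarrow> 'b"
  assumes linear_T: "Vector_Spaces.linear scale scale T"
begin

interpretation endo: vector_space_pair scale scale ..

lemma poly_op_0 [simp]: "poly_op scale T 0 x = 0"
  by (simp add: poly_op_def)

lemma poly_op_pCons [simp]: "poly_op scale T (pCons a p) x = a *s x + T (poly_op scale T p x)"
  by (cases "p = 0 \<and> a = 0") (auto simp: poly_op_def cCons_def endo.linear_0[OF linear_T])

lemma poly_op_linear_factor: "poly_op scale T [:-z, 1:] x = T x - z *s x"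
  by (simp add: endo.linear_0[OF linear_T])

lemma poly_op_add: "poly_op scale T (p + q) x = poly_op scale T p x + poly_op scale T q x"
  by (induction p q rule: poly_induct2)
    (simp_all add: endo.linear_add[OF linear_T] scale_left_distrib algebra_simps)

lemma poly_op_smult: "poly_op scale T (smult c p) x = c *s poly_op scale T p x"
  by (induction p) (simp_all add: endo.linear_scale[OF linear_T] scale_right_distrib)

lemma poly_op_sum: "poly_op scale T (\<Sum>i\<in>I. p i) x = (\<Sum>i\<in>I. poly_op scale T (p i) x)"
  by (induction I rule: infinite_finite_induct) (simp_all add: poly_op_add)

lemma poly_op_mult: "poly_op scale T (p * q) x = poly_op scale T p (poly_op scale T q x)"
  by (induction p) (simp_all add: poly_op_add poly_op_smult)

lemma linear_poly_op: "Vector_Spaces.linear scale scale (poly_op scale T p)"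
proof (induction p)
  case 0
  show ?case by (simp add: poly_op_def endo.linear_zero)
next
  case (pCons a p)
  have "Vector_Spaces.linear scale scale (\<lambda>x. a *s x + T (poly_op scale T p x))"
    using Vector_Spaces.linear_compose[OF pCons.IH linear_T]
    by (intro endo.linear_compose_add linear_scale_self) (simp add: o_def)
  then show ?case by simp
qed

end

locale complex_linear_operator = linear_operator scale T
  for scale :: "complex \<Rightarrow> 'b::ab_group_add \<Rightarrow> 'b" (infixr \<open>*s\<close> 75) and T
begin

interpretation endo: vector_space_pair scale scale ..

lemma poly_op_eq_0_imp_eq_0:
  assumes inj: "\<And>z. inj (\<lambda>x. T x - z *s x)"
  shows "p \<noteq> 0 \<Longrightarrow> poly_op scale T p x = 0 \<Longrightarrow> x = 0"
proof (induction "degree p" arbitrary: p x rule: less_induct)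
  case less
  show ?case
  proof (cases "degree p = 0")
    case True
    then obtain c where "p = [:c:]" by (metis degree_eq_zeroE)
    with less.prems show ?thesis by (simp add: endo.linear_0[OF linear_T])
  next
    case False
    then have "\<not> constant (poly p)" by (simp add: constant_degree)
    then obtain z where "poly p z = 0" using fundamental_theorem_of_algebra by blast
    define q where "q = synthetic_div p z"
    have p: "p = [:-z, 1:] * q"
      using synthetic_div_correct'[of z p] \<open>poly p z = 0\<close> by (simp add: q_def)
    have "degree q < degree p" using False by (simp add: q_def degree_synthetic_div)
    moreover have "q \<noteq> 0" using p less.prems(1) by auto
    moreover have "T (poly_op scale T q x) - z *s poly_op scale T q x = 0"
      using less.prems(2) unfolding p poly_op_mult poly_op_linear_factor .
    then have "poly_op scale T q x = 0"
      using inj endo.linear_inj_iff_eq_0[OF endo.linear_compose_sub[OF linear_T linear_scale_self]]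
      by blast
    ultimately show ?thesis using less.hyps by blast
  qed
qed

lemma resolvent_combination_eq_0:
  assumes inj: "\<And>z. inj (\<lambda>x. T x - z *s x)" and "w \<noteq> 0"
    and v: "\<And>z. T (v z) - z *s v z = w"
    and "finite L" and comb: "(\<Sum>z\<in>L. c z *s v z) = 0" and "\<mu> \<in> L"
  shows "c \<mu> = 0"
proof -
  define P where "P z = (\<Prod>\<nu>\<in>L - {z}. [:-\<nu>, 1:])" for z
  have PL: "poly_op scale T (\<Prod>\<nu>\<in>L. [:-\<nu>, 1:]) (v z) = poly_op scale T (P z) w"
    if "z \<in> L" for z
  proof -
    have "(\<Prod>\<nu>\<in>L. [:-\<nu>, 1:]) = P z * [:-z, 1:]"
      unfolding P_def using prod.remove[OF \<open>finite L\<close> that, of "\<lambda>\<nu>. [:-\<nu>, 1:]"]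
      by (metis mult.commute)
    then show ?thesis by (simp only: poly_op_mult poly_op_linear_factor v)
  qed
  have "poly_op scale T (\<Sum>z\<in>L. smult (c z) (P z)) w
      = poly_op scale T (\<Prod>\<nu>\<in>L. [:-\<nu>, 1:]) (\<Sum>z\<in>L. c z *s v z)"
    by (simp add: poly_op_sum poly_op_smult PL endo.linear_sum[OF linear_poly_op]
        endo.linear_scale[OF linear_poly_op])
  also have "\<dots> = 0"
    unfolding comb by (rule endo.linear_0[OF linear_poly_op])
  finally have "(\<Sum>z\<in>L. smult (c z) (P z)) = 0"
    using poly_op_eq_0_imp_eq_0[OF inj] \<open>w \<noteq> 0\<close> by blast
  then have "poly (\<Sum>z\<in>L. smult (c z) (P z)) \<mu> = 0" by simp
  then have "(\<Sum>z\<in>L. c z * poly (P z) \<mu>) = 0" by (simp add: poly_sum)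
  moreover have "poly (P z) \<mu> = 0" if "z \<in> L - {\<mu>}" for z
    using that \<open>\<mu> \<in> L\<close> \<open>finite L\<close> by (auto simp: P_def poly_prod prod_zero_iff)
  moreover have "poly (P \<mu>) \<mu> \<noteq> 0"
    using \<open>finite L\<close> by (auto simp: P_def poly_prod prod_zero_iff)
  ultimately show ?thesis
    using sum.remove[OF \<open>finite L\<close> \<open>\<mu> \<in> L\<close>, of "\<lambda>z. c z * poly (P z) \<mu>"] by simp
qed

text \<open>Dixmier's argument: otherwise the vectors \<open>(T - z)\<^sup>-\<^sup>1 w\<close>, \<open>z \<in> \<complex>\<close>, would form an
  uncountable independent set.\<close>
lemma ex_not_bij_shift:
  fixes w :: 'b
  assumes "countable G" and "span G = UNIV" and "w \<noteq> 0"
  shows "\<exists>z. \<not> bij (\<lambda>x. T x - z *s x)"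
proof (rule ccontr)
  assume "\<nexists>z. \<not> bij (\<lambda>x. T x - z *s x)"
  then have bij: "bij (\<lambda>x. T x - z *s x)" for z by blast
  define v where "v z = inv (\<lambda>x. T x - z *s x) w" for z
  have v: "T (v z) - z *s v z = w" for z
    using surj_f_inv_f[OF bij_is_surj[OF bij[of z]], of w] by (simp add: v_def)
  have "inj v"
  proof (rule injI)
    fix a b assume "v a = v b"
    then have "(b - a) *s v a = 0"
      using v[of a] v[of b] by (simp add: scale_left_diff_distrib algebra_simps) blast
    moreover have "v a \<noteq> 0" using v[of a] \<open>w \<noteq> 0\<close> endo.linear_0[OF linear_T] by auto
    ultimately show "a = b" by simp
  qed
  have "independent (range v)"
  proof
    assume "dependent (range v)"
    then obtain t u where "finite t" "t \<subseteq> range v" and comb: "(\<Sum>x\<in>t. u x *s x) = 0"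
      and "\<exists>x\<in>t. u x \<noteq> 0"
      unfolding dependent_explicit by blast
    then obtain L where "t = v ` L" by (meson subset_image_iff subset_UNIV)
    then have "finite L"
      using \<open>finite t\<close> finite_image_iff[OF inj_on_subset[OF \<open>inj v\<close> subset_UNIV]] by simp
    have "(\<Sum>z\<in>L. u (v z) *s v z) = 0"
      using comb \<open>inj v\<close> unfolding \<open>t = v ` L\<close> by (simp add: sum.reindex inj_on_subset)
    then have "u (v z) = 0" if "z \<in> L" for z
      by (rule resolvent_combination_eq_0[OF bij_is_inj[OF bij] \<open>w \<noteq> 0\<close> v \<open>finite L\<close> _ that])
    then show False using \<open>\<exists>x\<in>t. u x \<noteq> 0\<close> \<open>t = v ` L\<close> by blast
  qed
  then have "countable (UNIV :: complex set)"
    using countable_if_independent[OF assms(1,2)] countable_image_inj_on \<open>inj v\<close> by blast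
  then show False using uncountable_UNIV_complex by blast
qed

lemma eq_scale_if_commuting:
  fixes w :: 'b
  assumes irr: "irreducible_under scale Ops"
    and lin: "\<And>g. g \<in> Ops \<Longrightarrow> Vector_Spaces.linear scale scale g"
    and comm: "\<And>g x. g \<in> Ops \<Longrightarrow> T (g x) = g (T x)"
    and "countable G" and "span G = UNIV" and "w \<noteq> 0"
  shows "\<exists>c. \<forall>x. T x = c *s x"
proof -
  obtain z where z: "\<not> bij (\<lambda>x. T x - z *s x)"
    using ex_not_bij_shift[OF \<open>countable G\<close> \<open>span G = UNIV\<close> \<open>w \<noteq> 0\<close>] by blast
  have "\<forall>x. T x - z *s x = 0"
  proof (rule schur_lemma[OF irr lin _ _, THEN disjE])
    show "Vector_Spaces.linear scale scale (\<lambda>x. T x - z *s x)"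
      by (rule endo.linear_compose_sub[OF linear_T linear_scale_self])
    show "T (g x) - z *s g x = g (T x - z *s x)" if "g \<in> Ops" for g x
      using that by (simp add: comm endo.linear_diff[OF lin] endo.linear_scale[OF lin])
  qed (use z in auto)
  then show ?thesis by auto
qed

end

lemma fsum_eq_single:
  assumes "\<And>i. i \<noteq> a \<Longrightarrow> f i = 0"
  shows "fsum f = f a"
proof -
  have "{i. f i \<noteq> 0} \<subseteq> {a}" using assms by blast
  then have "fsum f = sum f {a}"
    unfolding fsum_def by (intro sum.mono_neutral_left) auto
  then show ?thesis by simp
qed

lemma fsum_eq_first: "(\<And>i. 0 < i \<Longrightarrow> f i = 0) \<Longrightarrow> fsum f = f 0"
  by (rule fsum_eq_single) simp

locale va_module =
  fixes sc :: "complex \<Rightarrow> 'v::ab_group_add \<Rightarrow> 'v"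
    and Y :: "'v \<Rightarrow> int \<Rightarrow> 'v \<Rightarrow> 'v"
    and vac :: 'v
    and scM :: "complex \<Rightarrow> 'm::ab_group_add \<Rightarrow> 'm"
    and YM :: "'v \<Rightarrow> int \<Rightarrow> 'm \<Rightarrow> 'm"
  assumes vertex_module: "vertex_module sc Y vac scM YM"
begin

sublocale vector_space scM
  using vertex_module by (simp add: vertex_module_def)

lemma linear_modes: "Vector_Spaces.linear scM scM (YM u n)"
  using vertex_module by (simp add: vertex_module_def)

lemma linear_modes_left: "Vector_Spaces.linear sc scM (\<lambda>u. YM u n w)"
  using vertex_module by (simp add: vertex_module_def)

lemma modes_zero_left [simp]: "YM 0 n w = 0"
  using module_hom.zero[OF module_hom_linearI[OF linear_modes_left]] by simp

lemma modes_zero_right [simp]: "YM u n 0 = 0"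
  using module_hom.zero[OF module_hom_linearI[OF linear_modes]] .

lemma modes_truncation: "\<exists>N. \<forall>n\<ge>N. YM u n w = 0"
  using vertex_module by (simp add: vertex_module_def)

lemma vacuum_modes: "YM vac n w = (if n = -1 then w else 0)"
  using vertex_module by (simp add: vertex_module_def)

lemma borcherds:
  "fsum (\<lambda>i. scM ((of_int m) gchoose i) (YM (Y u (l + int i) v) (m + n - int i) w)) =
   fsum (\<lambda>i. scM ((-1) ^ i * ((of_int l) gchoose i))
              (YM u (m + l - int i) (YM v (n + int i) w)
               - scM ((-1) powi l) (YM v (n + l - int i) (YM u (m + int i) w))))"
  using vertex_module unfolding vertex_module_def by blast

lemma irreducible_under_modes:
  "irreducible_module sc Y vac scM YM \<Longrightarrow> irreducible_under scM {YM u n | u n. True}"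
  unfolding irreducible_module_def irreducible_under_def by blast

lemma modes_commute:
  assumes "\<And>i. 0 \<le> i \<Longrightarrow> Y u i v = 0"
  shows "YM u m (YM v n w) = YM v n (YM u m w)"
  using borcherds[where u = u and v = v and w = w and l = 0 and m = m and n = n]
  by (simp add: assms fsum_eq_first gbinomial_0_left)

text \<open>The hypothesis gives \<open>D u = u\<^bsub>-2\<^esub> vac = 0\<close>, so \<open>Y(u, x)\<close> is constant in \<open>x\<close>.\<close>
lemma modes_eq_0_if_vacuum_like:
  assumes u: "\<And>j. -2 \<le> j \<Longrightarrow> Y u j vac = (if j = -1 then u else 0)" and "n \<noteq> -1"
  shows "YM u n w = 0"
proof -
  have "Y u (-2 + int i) vac = (if i = 1 then u else 0)" for i
    using u[of "-2 + int i"] by auto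
  then have "fsum (\<lambda>i. scM ((of_int (n + 1)) gchoose i)
                          (YM (Y u (-2 + int i) vac) (n + 1 + 0 - int i) w))
      = scM (of_int (n + 1)) (YM u n w)"
    by (subst fsum_eq_single[where a = 1]) (auto simp: u)
  with borcherds[where u = u and v = vac and w = w and l = "-2" and m = "n + 1" and n = 0]
  have "scM (of_int (n + 1)) (YM u n w) = 0"
    by (simp add: vacuum_modes fsum_eq_first)
  moreover have "(of_int (n + 1) :: complex) \<noteq> 0"
    using \<open>n \<noteq> -1\<close> by (simp only: of_int_eq_0_iff)
  ultimately show ?thesis by simp
qed

lemma mode_minus_one_product:
  assumes "\<And>j x. j \<noteq> -1 \<Longrightarrow> YM u j x = 0"
  shows "YM (Y u (-1) v) n w = YM u (-1) (YM v n w)"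
  using borcherds[where u = u and v = v and w = w and l = "-1" and m = 0 and n = n]
  by (simp add: assms fsum_eq_first gbinomial_0_left)

end

lemma poly_mapping_eq_sum_single:
  "F = (\<Sum>k\<in>Poly_Mapping.keys F. Poly_Mapping.single k (Poly_Mapping.lookup F k))"
  by (rule poly_mapping_eqI)
    (auto simp: lookup_sum lookup_single when_def in_keys_iff sum.delta)

lemma character_eq_prod_power_int:
  fixes c :: "('r::finite \<Rightarrow> int) \<Rightarrow> 'a::field"
  assumes mult: "\<And>k k'. c (\<lambda>i. k i + k' i) = c k * c k'" and one: "c (\<lambda>i. 0) = 1"
  shows "\<exists>a. (\<forall>i. a i \<noteq> 0) \<and> (\<forall>k. c k = (\<Prod>i\<in>UNIV. a i powi k i))"
proof -
  define d where "d i m = (\<lambda>j::'r. if j = i then m else 0)" for i and m :: int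
  have d_add: "(\<lambda>j. d i m j + d i m' j) = d i (m + m')" for i m m'
    by (auto simp: d_def)
  have d_0: "d i 0 = (\<lambda>j. 0)" for i
    by (auto simp: d_def)
  define a where "a i = c (d i 1)" for i
  have "a i * c (d i (-1)) = 1" for i
    using mult[of "d i 1" "d i (-1)"] by (simp add: a_def d_add d_0 one)
  then have a_nonzero: "a i \<noteq> 0" for i
    by (metis mult_zero_left zero_neq_one)
  have c_d: "c (d i m) = a i powi m" for i m
  proof (induction m rule: int_induct[where k = 0])
    case base
    show ?case using one by (simp add: d_0)
  next
    case (step1 m)
    then show ?case
      using mult[of "d i m" "d i 1"] a_nonzero by (simp add: d_add a_def power_int_add_1)
  next
    case (step2 m)
    have "c (d i m) = c (d i (m - 1)) * a i"
      using mult[of "d i (m - 1)" "d i 1"] by (simp add: d_add a_def)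
    with step2 show ?case
      using a_nonzero[of i] by (simp add: power_int_diff eq_divide_eq)
  qed
  have c_sum: "c (\<lambda>j. \<Sum>i\<in>A. d i (k i) j) = (\<Prod>i\<in>A. c (d i (k i)))" if "finite A" for A k
    using that
  proof (induction A rule: finite_induct)
    case empty
    show ?case using one by simp
  next
    case (insert x A)
    then show ?case
      using mult[of "d x (k x)" "\<lambda>j. \<Sum>i\<in>A. d i (k i) j"] by simp
  qed
  have "c k = (\<Prod>i\<in>UNIV. a i powi k i)" for k
  proof -
    have "k = (\<lambda>j. \<Sum>i\<in>UNIV. d i (k i) j)" by (auto simp: d_def)
    then show ?thesis using c_sum[of UNIV k] by (simp add: c_d)
  qed
  with a_nonzero show ?thesis by blast
qed

locale lr_module =
  fixes sc :: "complex \<Rightarrow> 'v::ab_group_add \<Rightarrow> 'v"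
    and Y :: "'v \<Rightarrow> int \<Rightarrow> 'v \<Rightarrow> 'v"
    and vac :: 'v
    and scW :: "complex \<Rightarrow> 'w::ab_group_add \<Rightarrow> 'w"
    and YW :: "(('r::finite \<Rightarrow> int) \<Rightarrow>\<^sub>0 'v) \<Rightarrow> int \<Rightarrow> 'w \<Rightarrow> 'w"
  assumes vertex_algebra: "vertex_algebra sc Y vac"
    and lr_vertex_module: "vertex_module (lr_scale sc) (lr_Y Y) (lr_vac vac) scW YW"
begin

sublocale V: va_module sc Y vac sc Y
  using vertex_algebra by unfold_locales (simp add: vertex_algebra_def)

sublocale W: va_module "lr_scale sc" "lr_Y Y" "lr_vac vac" scW YW
  by unfold_locales (rule lr_vertex_module)

lemma lr_scale_single: "lr_scale sc c (Poly_Mapping.single k v) = Poly_Mapping.single k (sc c v)"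
  by (cases "v = 0") (simp_all add: lr_scale_def)

definition monomial_op :: "('r \<Rightarrow> int) \<Rightarrow> 'w \<Rightarrow> 'w" where
  "monomial_op k = YW (Poly_Mapping.single k vac) (-1)"

lemma lr_Y_single:
  "lr_Y Y (Poly_Mapping.single k u) j (Poly_Mapping.single k' v) =
   Poly_Mapping.single (\<lambda>i. k i + k' i) (Y u j v)"
  by (cases "u = 0"; cases "v = 0") (simp_all add: lr_Y_def)

lemma lr_Y_vacuum_single: "j \<noteq> -1 \<Longrightarrow> lr_Y Y (Poly_Mapping.single k vac) j G = 0"
  by (simp add: lr_Y_def V.vacuum_modes)

lemma modes_vacuum_single: "j \<noteq> -1 \<Longrightarrow> YW (Poly_Mapping.single k vac) j w = 0"
  by (rule W.modes_eq_0_if_vacuum_like) (simp_all add: lr_vac_def lr_Y_single V.vacuum_modes)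

lemma monomial_op_commute: "monomial_op k (YW F n w) = YW F n (monomial_op k w)"
  unfolding monomial_op_def by (rule W.modes_commute) (simp add: lr_Y_vacuum_single)

lemma modes_single_eq:
  "YW (Poly_Mapping.single k x) n w = monomial_op k (YW (Poly_Mapping.single (\<lambda>i. 0) x) n w)"
proof -
  have "lr_Y Y (Poly_Mapping.single k vac) (-1) (Poly_Mapping.single (\<lambda>i. 0) x) =
        Poly_Mapping.single k x"
    by (simp add: lr_Y_single V.vacuum_modes)
  then show ?thesis
    unfolding monomial_op_def using W.mode_minus_one_product[OF modes_vacuum_single] by metis
qed

lemma monomial_op_mult: "monomial_op k (monomial_op k' w) = monomial_op (\<lambda>i. k i + k' i) w"
proof -
  have "lr_Y Y (Poly_Mapping.single k vac) (-1) (Poly_Mapping.single k' vac) =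
        Poly_Mapping.single (\<lambda>i. k i + k' i) vac"
    by (simp add: lr_Y_single V.vacuum_modes)
  then show ?thesis
    unfolding monomial_op_def using W.mode_minus_one_product[OF modes_vacuum_single] by metis
qed

lemma monomial_op_zero: "monomial_op (\<lambda>i. 0) w = w"
  using W.vacuum_modes by (simp add: monomial_op_def lr_vac_def)

lemma linear_modes_single: "Vector_Spaces.linear sc scW (\<lambda>x. YW (Poly_Mapping.single k x) n w)"
proof -
  interpret L: Vector_Spaces.linear "lr_scale sc" scW "\<lambda>u. YW u n w" by (rule W.linear_modes_left)
  show ?thesis
    unfolding Vector_Spaces.linear_iff
  proof (intro conjI allI)
    show "YW (Poly_Mapping.single k (x + y)) n w
        = YW (Poly_Mapping.single k x) n w + YW (Poly_Mapping.single k y) n w" for x y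
      using L.add[of "Poly_Mapping.single k x" "Poly_Mapping.single k y"] by (simp add: single_add)
    show "YW (Poly_Mapping.single k (sc c x)) n w = scW c (YW (Poly_Mapping.single k x) n w)" for c x
      using L.scale[of c "Poly_Mapping.single k x"] by (simp add: lr_scale_single)
  qed (fact V.vector_space_axioms W.vector_space_axioms)+
qed

lemma modes_eq_sum_single:
  "YW F n w = (\<Sum>k\<in>Poly_Mapping.keys F. YW (Poly_Mapping.single k (Poly_Mapping.lookup F k)) n w)"
proof -
  interpret L: Vector_Spaces.linear "lr_scale sc" scW "\<lambda>u. YW u n w" by (rule W.linear_modes_left)
  show ?thesis by (subst poly_mapping_eq_sum_single) (rule L.sum)
qed

lemma restriction_vertex_module:
  "vertex_module sc Y vac scW (\<lambda>v. YW (Poly_Mapping.single (\<lambda>i. 0) v))"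
  unfolding vertex_module_def
  using V.vector_space_axioms W.vector_space_axioms W.linear_modes linear_modes_single
    W.modes_truncation W.vacuum_modes[unfolded lr_vac_def]
    W.borcherds[of _ "Poly_Mapping.single (\<lambda>i. 0) _" _ "Poly_Mapping.single (\<lambda>i. 0) _"]
  by (simp add: lr_Y_single)

lemma countable_spanning_set:
  fixes w :: 'w
  assumes "countable_dim sc" and irr: "irreducible_under scW {YW F n | F n. True}" and "w \<noteq> 0"
  shows "\<exists>G. countable G \<and> W.span G = UNIV"
proof -
  obtain B where "countable B" and "V.span B = UNIV"
    using \<open>countable_dim sc\<close> unfolding countable_dim_def by blast
  define Ops where "Ops = (\<lambda>(k, b, n). YW (Poly_Mapping.single k b) n) ` (UNIV \<times> B \<times> UNIV)"
  have "countable Ops"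
    unfolding Ops_def using \<open>countable B\<close> by (blast intro: countableI_type)
  have single_mem: "YW (Poly_Mapping.single k x) n w \<in> S"
    if S: "W.subspace S" "\<forall>g\<in>Ops. g ` S \<subseteq> S" and "w \<in> S" for S k x n w
  proof -
    interpret L: Vector_Spaces.linear sc scW "\<lambda>x. YW (Poly_Mapping.single k x) n w"
      by (rule linear_modes_single)
    have "x \<in> V.span B" using \<open>V.span B = UNIV\<close> by simp
    then show ?thesis
    proof (induction rule: V.span_induct_alt)
      case base
      show ?case using W.subspace_0[OF S(1)] by simp
    next
      case (step c b y)
      have "YW (Poly_Mapping.single k b) n \<in> Ops"
        unfolding Ops_def using \<open>b \<in> B\<close> by (auto intro: image_eqI[where x = "(k, b, n)"])
      then have "YW (Poly_Mapping.single k b) n w \<in> S"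
        using S(2) \<open>w \<in> S\<close> by blast
      then show ?case
        using step.IH S(1) by (simp add: L.add L.scale W.subspace_add W.subspace_scale)
    qed
  qed
  have "irreducible_under scW Ops"
    unfolding irreducible_under_def
  proof (intro allI impI)
    fix S assume S: "W.subspace S \<and> (\<forall>g\<in>Ops. g ` S \<subseteq> S)"
    have "YW F n w \<in> S" if "w \<in> S" for F n w
      by (subst modes_eq_sum_single) (use S that in \<open>blast intro: W.subspace_sum single_mem\<close>)
    then show "S = {0} \<or> S = UNIV"
      using S by (intro irreducible_underD[OF irr]) auto
  qed
  moreover have "Vector_Spaces.linear scW scW g" if "g \<in> Ops" for g
    using that W.linear_modes unfolding Ops_def by auto
  ultimately show ?thesis
    using W.countable_spanning_set_if_irreducible \<open>countable Ops\<close> \<open>w \<noteq> 0\<close> by blast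
qed

lemma monomial_op_eq_scale:
  fixes w :: 'w
  assumes "countable_dim sc" and irr: "irreducible_under scW {YW F n | F n. True}" and "w \<noteq> 0"
  shows "\<exists>c. \<forall>x. monomial_op k x = scW c x"
proof -
  obtain G where "countable G" "W.span G = UNIV"
    using countable_spanning_set[OF assms] by blast
  interpret complex_linear_operator scW "monomial_op k"
    by intro_locales (simp add: linear_operator_axioms_def monomial_op_def W.linear_modes)
  show ?thesis
    using eq_scale_if_commuting[OF irr _ _ \<open>countable G\<close> \<open>W.span G = UNIV\<close> \<open>w \<noteq> 0\<close>]
      W.linear_modes monomial_op_commute by blast
qed

lemma ex_character_monomial_op:
  fixes w :: 'w
  assumes "countable_dim sc" and "irreducible_under scW {YW F n | F n. True}" and "w \<noteq> 0"
  shows "\<exists>a. (\<forall>i. a i \<noteq> 0) \<and> (\<forall>k x. monomial_op k x = scW (\<Prod>i\<in>UNIV. a i powi k i) x)"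
proof -
  obtain c where c: "\<And>k x. monomial_op k x = scW (c k) x"
    using monomial_op_eq_scale[OF assms] by metis
  have "c (\<lambda>i. k i + k' i) = c k * c k'" for k k'
    using monomial_op_mult[of k k' w]
    by (intro W.scale_right_imp_eq[OF \<open>w \<noteq> 0\<close>]) (simp only: c W.scale_scale)
  moreover have "c (\<lambda>i. 0) = 1"
    using monomial_op_zero[of w]
    by (intro W.scale_right_imp_eq[OF \<open>w \<noteq> 0\<close>]) (simp only: c W.scale_one)
  ultimately show ?thesis
    using character_eq_prod_power_int[of c] c by metis
qed

lemma twist_restriction_eq:
  assumes "\<And>k x. monomial_op k x = scW (\<Prod>i\<in>UNIV. a i powi k i) x"
  shows "twist_Y scW (\<lambda>v. YW (Poly_Mapping.single (\<lambda>i. 0) v)) a = YW"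
proof (intro ext)
  fix F n w
  have "YW F n w = (\<Sum>k\<in>Poly_Mapping.keys F. YW (Poly_Mapping.single k (Poly_Mapping.lookup F k)) n w)"
    by (rule modes_eq_sum_single)
  also have "\<dots> = twist_Y scW (\<lambda>v. YW (Poly_Mapping.single (\<lambda>i. 0) v)) a F n w"
    unfolding twist_Y_def by (rule sum.cong[OF refl], subst modes_single_eq) (rule assms)
  finally show "twist_Y scW (\<lambda>v. YW (Poly_Mapping.single (\<lambda>i. 0) v)) a F n w = YW F n w" ..
qed

end

lemma irreducible_moduleD:
  assumes "irreducible_module sc Y vac scM YM" and "module.subspace scM S"
    and "\<And>u n w. w \<in> S \<Longrightarrow> YM u n w \<in> S"
  shows "S = {0} \<or> S = UNIV"
  using assms(1)[unfolded irreducible_module_def] assms(2,3) by (elim conjE) blast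

lemma irreducible_module_if_twist_irreducible:
  fixes scU :: "complex \<Rightarrow> 'm::ab_group_add \<Rightarrow> 'm"
  assumes irr: "irreducible_module (lr_scale sc) (lr_Y Y) (lr_vac vac) scU (twist_Y scU YU a)"
    and "vertex_module sc Y vac scU YU"
  shows "irreducible_module sc Y vac scU YU"
  unfolding irreducible_module_def
proof (intro conjI allI impI)
  interpret U: va_module sc Y vac scU YU by unfold_locales fact
  show "vertex_module sc Y vac scU YU" by fact
  show "\<exists>w::'m. w \<noteq> 0" using irr[unfolded irreducible_module_def] by (elim conjE) assumption
  fix S assume S: "U.subspace S \<and> (\<forall>u n w. w \<in> S \<longrightarrow> YU u n w \<in> S)"
  have "twist_Y scU YU a F n w \<in> S" if "w \<in> S" for F n w
    unfolding twist_Y_def using S that by (intro U.subspace_sum U.subspace_scale) auto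
  with S show "S = {0} \<or> S = UNIV"
    by (intro irreducible_moduleD[OF irr]) auto
qed

lemma module_iso_refl: "vector_space sc \<Longrightarrow> module_iso sc Y sc Y"
  unfolding module_iso_def by (intro exI[of _ id] conjI) (simp_all add: vector_space.linear_id)

theorem proposition3p12:
  fixes sc :: "complex \<Rightarrow> 'v::ab_group_add \<Rightarrow> 'v"
    and Y :: "'v \<Rightarrow> int \<Rightarrow> 'v \<Rightarrow> 'v"
    and vac :: 'v
    and scW :: "complex \<Rightarrow> 'w::ab_group_add \<Rightarrow> 'w"
    and YW :: "(('r::finite \<Rightarrow> int) \<Rightarrow>\<^sub>0 'v) \<Rightarrow> int \<Rightarrow> 'w \<Rightarrow> 'w"
  assumes "vertex_algebra sc Y vac"
    and "countable_dim sc"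
    and "irreducible_module (lr_scale sc) (lr_Y Y) (lr_vac vac) scW YW"
  shows "\<exists>(scU :: complex \<Rightarrow> 'w \<Rightarrow> 'w) (YU :: 'v \<Rightarrow> int \<Rightarrow> 'w \<Rightarrow> 'w) (a :: 'r \<Rightarrow> complex).
           irreducible_module sc Y vac scU YU \<and> (\<forall>i. a i \<noteq> 0) \<and>
           module_iso scW YW scU (twist_Y scU YU a)"
proof -
  have W: "vertex_module (lr_scale sc) (lr_Y Y) (lr_vac vac) scW YW" and "\<exists>w::'w. w \<noteq> 0"
    using assms(3) by (simp_all add: irreducible_module_def)
  interpret lr_module sc Y vac scW YW
    by (rule lr_module.intro[OF assms(1) W])
  obtain w :: 'w where "w \<noteq> 0" using \<open>\<exists>w. w \<noteq> 0\<close> by blast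
  obtain a where "\<forall>i. a i \<noteq> 0" and a: "\<forall>k x. monomial_op k x = scW (\<Prod>i\<in>UNIV. a i powi k i) x"
    using ex_character_monomial_op[OF assms(2) W.irreducible_under_modes[OF assms(3)] \<open>w \<noteq> 0\<close>]
    by blast
  define YU where "YU v = YW (Poly_Mapping.single (\<lambda>i. 0) v)" for v
  have twist: "twist_Y scW YU a = YW"
    unfolding YU_def using a by (intro twist_restriction_eq) blast
  have "vertex_module sc Y vac scW YU"
    unfolding YU_def by (rule restriction_vertex_module)
  then have "irreducible_module sc Y vac scW YU"
    using irreducible_module_if_twist_irreducible[of sc Y vac scW YU a] assms(3)
    unfolding twist by blast
  moreover have "module_iso scW YW scW (twist_Y scW YU a)"
    unfolding twist by (rule module_iso_refl[OF W.vector_space_axioms])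
  ultimately show ?thesis using \<open>\<forall>i. a i \<noteq> 0\<close> by blast
qed

end
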